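(* Consider the setting in the context and let $\alpha>0$. (i) (Necessary condition) If the modified 4-player game is $\alpha$-strongly monotone, then for both $i\in\{1,2\}$ and at all points, $\epsilon_i\nabla^2\nu_i\succeq\alpha I$ and $\nabla_p^2D_i\succeq\alpha I$; that is, $\epsilon_i\nu_i$ is $\alpha$-strongly convex and $D_i(p_i,\pi_{-i})$ is $\alpha$-strongly convex in $p_i$ for each fixed $\pi_{-i}$. (ii) (Sufficient condition) If each $D_i$ is jointly convex in both arguments, and for both $i\in\{1,2\}$ and at all points $$\epsilon_i\nabla^2\nu_i(\pi_i)-\tfrac12\nabla_\pi^2D_{-i}(p_{-i},\pi_i)\succeq\alpha I,\qquad \tfrac12\nabla_p^2D_{-i}(p_{-i},\pi_i)\succeq\alpha I,$$ then the modified 4-player game is $\alpha$-strongly monotone.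
   Context: Two players $i\in\{1,2\}$ have finite action sets $\mathcal{A}_1,\mathcal{A}_2$; $-i$ denotes the other player, $\Delta_n$ the probability simplex in $\mathbb{R}^n$. Payoff matrices $R_1\in\mathbb{R}^{|\mathcal{A}_1|\times|\mathcal{A}_2|}$, $R_2\in\mathbb{R}^{|\mathcal{A}_2|\times|\mathcal{A}_1|}$. For each $i$ fix $\epsilon_i>0$, a twice continuously differentiable strictly convex function $\nu_i$ on an open set containing $\Delta_{|\mathcal{A}_i|}$, and a twice continuously differentiable penalty function $D_i(p,\pi)$, $p,\pi\in\Delta_{|\mathcal{A}_{-i}|}$ (defined on an open set containing this product), convex in its first argument $p$. Notation: $\nabla^2\nu_i$ is the Hessian of $\nu_i$; $\nabla_p^2D_i$ and $\nabla_\pi^2D_i$ are the Hessians of $D_i$ with respect to its first and second argument respectively; $\succeq$ is the positive semidefinite order. The modified 4-player game has joint strategy $z=(\pi_1,\pi_2,p_1,p_2)\in\mathcal{Z}=\Delta_{|\mathcal{A}_1|}\times\Delta_{|\mathcal{A}_2|}\times\Delta_{|\mathcal{A}_2|}\times\Delta_{|\mathcal{A}_1|}$; player $\pi_i$ minimizes $J_i(z)=-\pi_i^TR_ip_i-D_i(p_i,\pi_{-i})+\epsilon_i\nu_i(\pi_i)$ over $\pi_i$ and adversary $p_i$ minimizes $\bar J_i(z)=\pi_i^TR_ip_i+D_i(p_i,\pi_{-i})-\epsilon_i\nu_i(\pi_i)$ over $p_i$. Its gradient operator is $F(z;\mathbf{R})=(-R_1p_1+\epsilon_1\nabla\nu_1(\pi_1),\,-R_2p_2+\epsilon_2\nabla\nu_2(\pi_2),\,R_1^T\pi_1+\nabla_{p_1}D_1(p_1,\pi_2),\,R_2^T\pi_2+\nabla_{p_2}D_2(p_2,\pi_1))$,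 and the game is $\alpha$-strongly monotone if $(z-z')^T(F(z;\mathbf{R})-F(z';\mathbf{R}))\ge\alpha\|z-z'\|_2^2$ for all $z,z'\in\mathcal{Z}$.
   Formalization: Each inequality $\succeq\alpha I$ in (i) and (ii) is tested only on vectors whose coordinates sum to zero (directions tangent to the simplex), not on the whole space. Apart from conventions, each condition added here is assumed in the paper as well or is needed for the statement above to hold. *)

theory Defs
  imports "HOL-Analysis.Analysis"
begin

definition prob_simplex :: "(real^('n::finite)) set" where
  "prob_simplex = {x. (\<forall>i. 0 \<le> x $ i) \<and> (\<Sum>i\<in>UNIV. x $ i) = 1}"

(* Strict convexity of f on S (S need not be convex: only segments lying in S count). *)
definition strictly_convex_on :: "'a::real_vector set \<Rightarrow> ('a \<Rightarrow> real) \<Rightarrow> bool" where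
  "strictly_convex_on S f \<longleftrightarrow>
     (\<forall>x\<in>S. \<forall>y\<in>S. x \<noteq> y \<longrightarrow> (\<forall>u::real. 0 < u \<and> u < 1 \<longrightarrow>
        (1 - u) *\<^sub>R x + u *\<^sub>R y \<in> S \<longrightarrow>
        f ((1 - u) *\<^sub>R x + u *\<^sub>R y) < (1 - u) * f x + u * f y))"

definition C2_on :: "(real^('n::finite)) set \<Rightarrow> (real^'n \<Rightarrow> real) \<Rightarrow> (real^'n \<Rightarrow> real^'n)
    \<Rightarrow> (real^'n \<Rightarrow> real^'n^'n) \<Rightarrow> bool" where
  "C2_on U f g H \<longleftrightarrow> open U \<and>
     (\<forall>x\<in>U. (f has_derivative (\<lambda>h. g x \<bullet> h)) (at x) \<and>
             (g has_derivative (\<lambda>h. H x *v h)) (at x)) \<and>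
     continuous_on U H"

(* D(p,\<pi>) is twice continuously differentiable on the open set U of pairs (p,\<pi>), with
   partial gradients gp (w.r.t. p), gq (w.r.t. \<pi>) and Hessian blocks
   Hpp = \<nabla>_p^2 D, Hpq, Hqp (mixed), Hqq = \<nabla>_\<pi>^2 D. *)
definition C2_on2 :: "((real^('n::finite)) \<times> (real^'n)) set \<Rightarrow> (real^'n \<Rightarrow> real^'n \<Rightarrow> real)
    \<Rightarrow> (real^'n \<Rightarrow> real^'n \<Rightarrow> real^'n) \<Rightarrow> (real^'n \<Rightarrow> real^'n \<Rightarrow> real^'n)
    \<Rightarrow> (real^'n \<Rightarrow> real^'n \<Rightarrow> real^'n^'n) \<Rightarrow> (real^'n \<Rightarrow> real^'n \<Rightarrow> real^'n^'n)
    \<Rightarrow> (real^'n \<Rightarrow> real^'n \<Rightarrow> real^'n^'n) \<Rightarrow> (real^'n \<Rightarrow> real^'n \<Rightarrow> real^'n^'n) \<Rightarrow> bool" where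
  "C2_on2 U D gp gq Hpp Hpq Hqp Hqq \<longleftrightarrow> open U \<and>
     (\<forall>z\<in>U.
        ((\<lambda>w. D (fst w) (snd w)) has_derivative
            (\<lambda>h. gp (fst z) (snd z) \<bullet> fst h + gq (fst z) (snd z) \<bullet> snd h)) (at z) \<and>
        ((\<lambda>w. gp (fst w) (snd w)) has_derivative
            (\<lambda>h. Hpp (fst z) (snd z) *v fst h + Hpq (fst z) (snd z) *v snd h)) (at z) \<and>
        ((\<lambda>w. gq (fst w) (snd w)) has_derivative
            (\<lambda>h. Hqp (fst z) (snd z) *v fst h + Hqq (fst z) (snd z) *v snd h)) (at z)) \<and>
     continuous_on U (\<lambda>w. Hpp (fst w) (snd w)) \<and> continuous_on U (\<lambda>w. Hpq (fst w) (snd w)) \<and>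
     continuous_on U (\<lambda>w. Hqp (fst w) (snd w)) \<and> continuous_on U (\<lambda>w. Hqq (fst w) (snd w))"

(* Loewner order H \<succeq> a I, tested on the directions tangent to the simplex
   (vectors with coordinate sum 0). *)
definition psd_ge :: "real^'n^('n::finite) \<Rightarrow> real \<Rightarrow> bool" where
  "psd_ge H a \<longleftrightarrow> (\<forall>v::real^'n. (\<Sum>i\<in>UNIV. v $ i) = 0 \<longrightarrow> a * (v \<bullet> v) \<le> v \<bullet> (H *v v))"

definition game_F ::
  "real^'n2^'n1 \<Rightarrow> real^'n1^'n2 \<Rightarrow> real \<Rightarrow> real \<Rightarrow>
   (real^('n1::finite) \<Rightarrow> real^'n1) \<Rightarrow> (real^('n2::finite) \<Rightarrow> real^'n2) \<Rightarrow>
   (real^'n2 \<Rightarrow> real^'n2 \<Rightarrow> real^'n2) \<Rightarrow> (real^'n1 \<Rightarrow> real^'n1 \<Rightarrow> real^'n1) \<Rightarrow>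
   (real^'n1) \<times> (real^'n2) \<times> (real^'n2) \<times> (real^'n1) \<Rightarrow>
   (real^'n1) \<times> (real^'n2) \<times> (real^'n2) \<times> (real^'n1)" where
  "game_F R1 R2 e1 e2 gnu1 gnu2 gpD1 gpD2 z =
     (case z of (\<pi>1, \<pi>2, p1, p2) \<Rightarrow>
       (- (R1 *v p1) + e1 *\<^sub>R gnu1 \<pi>1,
        - (R2 *v p2) + e2 *\<^sub>R gnu2 \<pi>2,
        transpose R1 *v \<pi>1 + gpD1 p1 \<pi>2,
        transpose R2 *v \<pi>2 + gpD2 p2 \<pi>1))"

definition joint_set :: "((real^('n1::finite)) \<times> (real^('n2::finite)) \<times> (real^'n2) \<times> (real^'n1)) set" where
  "joint_set = prob_simplex \<times> prob_simplex \<times> prob_simplex \<times> prob_simplex"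

definition strongly_monotone_game where
  "strongly_monotone_game R1 R2 e1 e2 gnu1 gnu2 gpD1 gpD2 a \<longleftrightarrow>
     (\<forall>z\<in>joint_set. \<forall>z'\<in>joint_set.
        (z - z') \<bullet> (game_F R1 R2 e1 e2 gnu1 gnu2 gpD1 gpD2 z - game_F R1 R2 e1 e2 gnu1 gnu2 gpD1 gpD2 z')
          \<ge> a * (norm (z - z'))\<^sup>2)"

end

(*
  Both directions compare the game operator F with its derivative along segments of the joint
  strategy set.

  Necessity: freezing all blocks but one, strong monotonicity of F restricts to strong monotonicity
  of eps_i grad nu_i and of grad_p D_i(., pi). Differentiating along tangent directions at relative
  interior points of the simplex gives the Hessian bounds there, and continuity of the Hessians
  carries them to the boundary.

  Sufficiency: in (z - z') . (F z - F z') the bilinear payoff terms cancel, leaving one block for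
  each pair (p_i, pi_-i). Such a block is half the gradient of the jointly convex D_i, which is
  monotone, plus the operator (1/2 grad_p D_i, eps grad nu - 1/2 grad_pi D_i). By symmetry of the
  mixed second derivatives of D_i, the symmetric part of the derivative of the latter is
  diag(1/2 Hess_p D_i, eps Hess nu - 1/2 Hess_pi D_i), so the mean value theorem along segments
  makes it alpha-strongly monotone.
*)

theory Submission
  imports Defs
begin

section \<open>Directional derivatives and monotone gradients\<close>

lemma directional_derivative_tendsto:
  fixes f :: "'a::real_normed_vector \<Rightarrow> real"
  assumes "(f has_derivative f') (at x)"
  shows "((\<lambda>t. (f (x + t *\<^sub>R v) - f x) / t) \<longlongrightarrow> f' v) (at_right 0)"
proof -
  have "((f \<circ> (\<lambda>t. x + t *\<^sub>R v)) has_derivative (f' \<circ> (\<lambda>t. t *\<^sub>R v))) (at 0)"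
    by (rule diff_chain_at) (auto intro!: derivative_eq_intros simp: assms)
  then have "((\<lambda>t. f (x + t *\<^sub>R v)) has_real_derivative f' v) (at 0)"
    using linear_scale[OF has_derivative_linear[OF assms]]
    by (simp add: has_field_derivative_def o_def mult.commute[of _ "f' v"])
  then show ?thesis
    by (auto simp: has_field_derivative_iff intro: tendsto_mono[OF at_le])
qed

lemma convex_on_above_tangent:
  fixes f :: "'a::real_normed_vector \<Rightarrow> real"
  assumes cvx: "convex_on C f" and "x \<in> C" "y \<in> C" and "(f has_derivative f') (at x)"
  shows "f' (y - x) \<le> f y - f x"
proof (rule tendsto_upperbound)
  show "((\<lambda>t. (f (x + t *\<^sub>R (y - x)) - f x) / t) \<longlongrightarrow> f' (y - x)) (at_right 0)"
    by (rule directional_derivative_tendsto) fact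
  show "\<forall>\<^sub>F t in at_right 0. (f (x + t *\<^sub>R (y - x)) - f x) / t \<le> f y - f x"
  proof (rule eventually_at_rightI[of 0 1])
    fix t :: real
    assume t: "t \<in> {0<..<1}"
    have "f (x + t *\<^sub>R (y - x)) = f ((1 - t) *\<^sub>R x + t *\<^sub>R y)"
      by (simp add: algebra_simps)
    also have "\<dots> \<le> (1 - t) * f x + t * f y"
      using t assms by (intro convex_onD[OF cvx]) auto
    finally show "(f (x + t *\<^sub>R (y - x)) - f x) / t \<le> f y - f x"
      using t by (simp add: field_simps)
  qed simp
qed simp

lemma convex_on_gradient_monotone:
  fixes f :: "'a::real_inner \<Rightarrow> real"
  assumes "convex_on C f" and "x \<in> C" "y \<in> C"
    and "(f has_derivative (\<lambda>h. g x \<bullet> h)) (at x)" "(f has_derivative (\<lambda>h. g y \<bullet> h)) (at y)"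
  shows "0 \<le> (y - x) \<bullet> (g y - g x)"
proof -
  have "g x \<bullet> (y - x) \<le> f y - f x" "g y \<bullet> (x - y) \<le> f x - f y"
    using assms by (auto intro: convex_on_above_tangent)
  then show ?thesis
    by (simp add: inner_diff_left inner_diff_right inner_commute)
qed

lemma strongly_monotone_of_derivative_bound:
  fixes G :: "'a::real_inner \<Rightarrow> 'a"
  assumes "convex C" "x \<in> C" "y \<in> C"
    and deriv: "\<And>w. w \<in> C \<Longrightarrow> (G has_derivative G' w) (at w)"
    and bound: "\<And>w. w \<in> C \<Longrightarrow> \<alpha> * (norm (y - x))\<^sup>2 \<le> (y - x) \<bullet> G' w (y - x)"
  shows "\<alpha> * (norm (y - x))\<^sup>2 \<le> (y - x) \<bullet> (G y - G x)"
proof -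
  define \<gamma> where "\<gamma> = (\<lambda>t. x + t *\<^sub>R (y - x))"
  have \<gamma>C: "\<gamma> t \<in> C" if "0 \<le> t" "t \<le> 1" for t
    using convexD_alt[OF assms(1-3) that] by (simp add: \<gamma>_def algebra_simps)
  define \<psi> where "\<psi> = (\<lambda>t. (y - x) \<bullet> G (\<gamma> t))"
  have "(\<psi> has_derivative (\<lambda>u. (y - x) \<bullet> G' (\<gamma> t) (u *\<^sub>R (y - x))))
          (at t within {0..1})" if "0 \<le> t" "t \<le> 1" for t
  proof -
    have "((G \<circ> \<gamma>) has_derivative (G' (\<gamma> t) \<circ> (\<lambda>u. u *\<^sub>R (y - x)))) (at t)"
      using deriv \<gamma>C[OF that] by (auto simp: \<gamma>_def intro!: diff_chain_at derivative_eq_intros)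
    then show ?thesis
      unfolding \<psi>_def by (auto simp: o_def intro: has_derivative_at_withinI has_derivative_inner_right)
  qed
  then obtain \<xi> where "\<xi> \<in> {0<..<1}"
    and "\<psi> 1 - \<psi> 0 = (y - x) \<bullet> G' (\<gamma> \<xi>) ((1 - 0) *\<^sub>R (y - x))"
    using mvt_simple[of 0 1 \<psi> "\<lambda>t u. (y - x) \<bullet> G' (\<gamma> t) (u *\<^sub>R (y - x))"] by auto
  moreover have "\<gamma> \<xi> \<in> C"
    using \<open>\<xi> \<in> {0<..<1}\<close> by (intro \<gamma>C) auto
  ultimately show ?thesis
    using bound by (simp add: \<psi>_def \<gamma>_def inner_diff_right)
qed

lemma derivative_bound_of_strongly_monotone:
  fixes G :: "'a::real_inner \<Rightarrow> 'a"
  assumes deriv: "(G has_derivative G') (at x)"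
    and feasible: "\<forall>\<^sub>F t in at_right 0. x + t *\<^sub>R v \<in> C"
    and mono: "\<And>y. y \<in> C \<Longrightarrow> \<alpha> * (norm (y - x))\<^sup>2 \<le> (y - x) \<bullet> (G y - G x)"
  shows "\<alpha> * (v \<bullet> v) \<le> v \<bullet> G' v"
proof (rule tendsto_lowerbound)
  show "((\<lambda>t. (v \<bullet> G (x + t *\<^sub>R v) - v \<bullet> G x) / t) \<longlongrightarrow> v \<bullet> G' v) (at_right 0)"
    using deriv by (intro directional_derivative_tendsto has_derivative_inner_right)
  show "\<forall>\<^sub>F t in at_right 0. \<alpha> * (v \<bullet> v) \<le> (v \<bullet> G (x + t *\<^sub>R v) - v \<bullet> G x) / t"
    using feasible eventually_at_right_less
  proof eventually_elim
    case (elim t)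
    have "(norm (x + t *\<^sub>R v - x))\<^sup>2 = t * (t * (v \<bullet> v))"
      by (simp only: power2_norm_eq_inner add_diff_cancel_left' inner_scaleR_left inner_scaleR_right)
    then have "t * (t * (\<alpha> * (v \<bullet> v))) \<le> t * (v \<bullet> G (x + t *\<^sub>R v) - v \<bullet> G x)"
      using mono[OF elim(1)] by (simp add: inner_diff_right algebra_simps)
    then have "t * (\<alpha> * (v \<bullet> v)) \<le> v \<bullet> G (x + t *\<^sub>R v) - v \<bullet> G x"
      using elim(2) by (simp add: mult_le_cancel_left_pos)
    then show ?case
      using elim(2) by (simp add: pos_le_divide_eq mult.commute)
  qed
qed simp

section \<open>Symmetry of second derivatives\<close>

definition second_difference :: "('a::real_vector \<Rightarrow> real) \<Rightarrow> 'a \<Rightarrow> 'a \<Rightarrow> 'a \<Rightarrow> real \<Rightarrow> real" where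
  "second_difference f z h k t = f (z + t *\<^sub>R h + t *\<^sub>R k) - f (z + t *\<^sub>R h) - f (z + t *\<^sub>R k) + f z"

lemma second_difference_commute: "second_difference f z h k t = second_difference f z k h t"
  unfolding second_difference_def by (simp add: add_ac)

lemma second_difference_mean_value:
  fixes f :: "'a::real_inner \<Rightarrow> real"
  assumes fd: "\<And>x. x \<in> S \<Longrightarrow> (f has_derivative (\<lambda>h. g x \<bullet> h)) (at x)"
    and t: "0 < t"
    and seg: "\<And>s. 0 \<le> s \<Longrightarrow> s \<le> t \<Longrightarrow> z + t *\<^sub>R h + s *\<^sub>R k \<in> S \<and> z + s *\<^sub>R k \<in> S"
  shows "\<exists>\<sigma>\<in>{0<..<t}. second_difference f z h k t = t * ((g (z + t *\<^sub>R h + \<sigma> *\<^sub>R k) - g (z + \<sigma> *\<^sub>R k)) \<bullet> k)"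
proof -
  define \<phi> where "\<phi> = (\<lambda>s. f (z + t *\<^sub>R h + s *\<^sub>R k) - f (z + s *\<^sub>R k))"
  have "(\<phi> has_derivative (\<lambda>u. u * ((g (z + t *\<^sub>R h + s *\<^sub>R k) - g (z + s *\<^sub>R k)) \<bullet> k)))
          (at s within {0..t})" if "0 \<le> s" "s \<le> t" for s
  proof -
    have "((f \<circ> (\<lambda>s. z + t *\<^sub>R h + s *\<^sub>R k)) has_derivative
            ((\<lambda>h'. g (z + t *\<^sub>R h + s *\<^sub>R k) \<bullet> h') \<circ> (\<lambda>u. u *\<^sub>R k))) (at s)"
      "((f \<circ> (\<lambda>s. z + s *\<^sub>R k)) has_derivative ((\<lambda>h'. g (z + s *\<^sub>R k) \<bullet> h') \<circ> (\<lambda>u. u *\<^sub>R k))) (at s)"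
      using seg[OF that] by (auto intro!: diff_chain_at derivative_eq_intros fd)
    from has_derivative_diff[OF this] show ?thesis
      unfolding \<phi>_def o_def
      by (auto intro: has_derivative_at_withinI simp: inner_diff_left algebra_simps)
  qed
  then obtain \<sigma> where "\<sigma> \<in> {0<..<t}"
    and "\<phi> t - \<phi> 0 = (t - 0) * ((g (z + t *\<^sub>R h + \<sigma> *\<^sub>R k) - g (z + \<sigma> *\<^sub>R k)) \<bullet> k)"
    using mvt_simple[OF t, of \<phi> "\<lambda>s u. u * ((g (z + t *\<^sub>R h + s *\<^sub>R k) - g (z + s *\<^sub>R k)) \<bullet> k)"]
    by auto
  then show ?thesis
    unfolding \<phi>_def second_difference_def by (auto simp: algebra_simps)
qed

lemma second_difference_bound:
  fixes f :: "'a::real_inner \<Rightarrow> real"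
  assumes fd: "\<And>x. x \<in> S \<Longrightarrow> (f has_derivative (\<lambda>h. g x \<bullet> h)) (at x)"
    and lin: "linear G" and "0 \<le> c"
    and near: "\<And>u. norm u < r \<Longrightarrow> z + u \<in> S \<and> norm (g (z + u) - g z - G u) \<le> c * norm u"
    and t: "0 < t" "t * (norm h + norm k) < r"
  shows "\<bar>second_difference f z h k t - t\<^sup>2 * (G h \<bullet> k)\<bar> \<le> c * t\<^sup>2 * ((norm h + 2 * norm k) * norm k)"
proof -
  have norms: "norm (t *\<^sub>R h + s *\<^sub>R k) \<le> t * norm h + s * norm k" "norm (s *\<^sub>R k) = s * norm k"
    "s * norm k \<le> t * norm k" if "0 \<le> s" "s \<le> t" for s
    using norm_triangle_ineq[of "t *\<^sub>R h" "s *\<^sub>R k"] that t by (auto intro: mult_right_mono)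
  have "0 \<le> t * norm h"
    using t by simp
  moreover have tsplit: "t * (norm h + norm k) = t * norm h + t * norm k"
    by (simp add: distrib_left)
  ultimately have "norm (t *\<^sub>R h + s *\<^sub>R k) < r \<and> norm (s *\<^sub>R k) < r" if "0 \<le> s" "s \<le> t" for s
    using norms[OF that] t by linarith
  then have "z + t *\<^sub>R h + s *\<^sub>R k \<in> S \<and> z + s *\<^sub>R k \<in> S" if "0 \<le> s" "s \<le> t" for s
    using near that by (simp add: add.assoc)
  then obtain \<sigma> where \<sigma>: "0 < \<sigma>" "\<sigma> < t" and mv:
    "second_difference f z h k t = t * ((g (z + t *\<^sub>R h + \<sigma> *\<^sub>R k) - g (z + \<sigma> *\<^sub>R k)) \<bullet> k)"
    using second_difference_mean_value[where S = S and z = z and h = h and k = k, OF fd \<open>0 < t\<close>] by auto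
  define u1 u2 where "u1 = t *\<^sub>R h + \<sigma> *\<^sub>R k" and "u2 = \<sigma> *\<^sub>R k"
  define r1 r2 where "r1 = g (z + u1) - g z - G u1" and "r2 = g (z + u2) - g z - G u2"
  have "norm u1 \<le> t * norm h + t * norm k" "norm u2 \<le> t * norm k"
    using norms[of \<sigma>] \<sigma> unfolding u1_def u2_def by auto
  moreover have "norm u1 < r" "norm u2 < r"
    using calculation \<open>0 \<le> t * norm h\<close> t tsplit by linarith+
  then have "norm r1 \<le> c * norm u1" "norm r2 \<le> c * norm u2"
    using near unfolding r1_def r2_def by simp_all
  ultimately have "norm r1 + norm r2 \<le> c * (t * (norm h + 2 * norm k))"
    using \<open>0 \<le> c\<close> by (smt (verit) distrib_left mult_left_mono)
  then have "\<bar>(r1 - r2) \<bullet> k\<bar> \<le> c * (t * (norm h + 2 * norm k)) * norm k"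
    using Cauchy_Schwarz_ineq2[of "r1 - r2" k] norm_triangle_ineq4[of r1 r2]
    by (smt (verit) mult_right_mono norm_ge_zero)
  moreover have "G u1 - G u2 = t *\<^sub>R G h"
    unfolding u1_def u2_def using linear_add[OF lin] linear_scale[OF lin] by simp
  then have "second_difference f z h k t - t\<^sup>2 * (G h \<bullet> k) = t * ((r1 - r2) \<bullet> k)"
    unfolding mv r1_def r2_def
    by (simp add: u1_def u2_def add.assoc power2_eq_square algebra_simps inner_diff_left)
  ultimately show ?thesis
    using t by (simp add: abs_mult power2_eq_square mult_left_mono mult.assoc mult.left_commute)
qed

lemma second_difference_tendsto:
  fixes f :: "'a::real_inner \<Rightarrow> real"
  assumes S: "open S" "z \<in> S"
    and fd: "\<And>x. x \<in> S \<Longrightarrow> (f has_derivative (\<lambda>h. g x \<bullet> h)) (at x)"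
    and gd: "(g has_derivative G) (at z)"
  shows "((\<lambda>t. second_difference f z h k t / t\<^sup>2) \<longlongrightarrow> G h \<bullet> k) (at_right 0)"
  unfolding tendsto_iff dist_real_def eventually_at_right_field
proof (intro allI impI)
  fix e :: real
  assume "0 < e"
  define C where "C = (norm h + 2 * norm k) * norm k + 1"
  have "C > 0"
    unfolding C_def by (simp add: add_nonneg_pos)
  with \<open>0 < e\<close> obtain d1 where "d1 > 0" and
    "\<forall>y. norm (y - z) < d1 \<longrightarrow> norm (g y - g z - G (y - z)) \<le> e / (2 * C) * norm (y - z)"
    using gd unfolding has_derivative_at_alt by (metis divide_pos_pos mult_pos_pos zero_less_numeral)
  moreover obtain r where "r > 0" "ball z r \<subseteq> S"
    using S openE by blast
  ultimately have near: "z + u \<in> S \<and> norm (g (z + u) - g z - G u) \<le> e / (2 * C) * norm u"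
    if "norm u < min d1 r" for u
    using that by (auto simp: dist_norm dest!: spec[of _ "z + u"])
  have N: "norm h + norm k + 1 > 0"
    using norm_ge_zero[of h] norm_ge_zero[of k] by linarith
  define d where "d = min d1 r / (norm h + norm k + 1)"
  show "\<exists>d>0. \<forall>t>0. t < d \<longrightarrow> \<bar>second_difference f z h k t / t\<^sup>2 - G h \<bullet> k\<bar> < e"
  proof (intro exI[of _ d] conjI allI impI)
    show "d > 0"
      unfolding d_def using \<open>d1 > 0\<close> \<open>r > 0\<close> N by simp
    fix t :: real
    assume "0 < t" "t < d"
    then have "t * (norm h + norm k) < min d1 r"
      unfolding d_def using N by (simp add: field_simps)
    with \<open>0 < t\<close> \<open>0 < e\<close> \<open>C > 0\<close> have "\<bar>second_difference f z h k t - t\<^sup>2 * (G h \<bullet> k)\<bar>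
        \<le> e / (2 * C) * t\<^sup>2 * ((norm h + 2 * norm k) * norm k)"
      by (intro second_difference_bound[where S = S and r = "min d1 r", OF fd has_derivative_linear[OF gd] _ near]) auto
    also have "\<dots> \<le> e / (2 * C) * t\<^sup>2 * C"
      using \<open>0 < e\<close> \<open>C > 0\<close> unfolding C_def by (intro mult_left_mono) auto
    also have "\<dots> < e * t\<^sup>2"
      using \<open>0 < e\<close> \<open>C > 0\<close> \<open>0 < t\<close> by simp
    finally show "\<bar>second_difference f z h k t / t\<^sup>2 - G h \<bullet> k\<bar> < e"
      using \<open>0 < t\<close> by (simp add: field_simps abs_div)
  qed
qed

lemma hessian_symmetric:
  fixes f :: "'a::real_inner \<Rightarrow> real"
  assumes "open S" "z \<in> S"
    and "\<And>x. x \<in> S \<Longrightarrow> (f has_derivative (\<lambda>h. g x \<bullet> h)) (at x)"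
    and "(g has_derivative G) (at z)"
  shows "G h \<bullet> k = G k \<bullet> h"
  using second_difference_tendsto[OF assms, of h k] second_difference_tendsto[OF assms, of k h]
  by (simp add: second_difference_commute[of f z k h] tendsto_unique[OF trivial_limit_at_right_real])

lemma C2_on2_mixed_hessian_symmetric:
  assumes "C2_on2 V D gp gq Hpp Hpq Hqp Hqq" and "(p, q) \<in> V"
  shows "(Hqp p q *v a) \<bullet> b = (Hpq p q *v b) \<bullet> a"
proof -
  have "open V"
    and "\<And>w. w \<in> V \<Longrightarrow> ((\<lambda>w. D (fst w) (snd w)) has_derivative
                  (\<lambda>h. (gp (fst w) (snd w), gq (fst w) (snd w)) \<bullet> h)) (at w)"
    and "((\<lambda>w. gp (fst w) (snd w)) has_derivative (\<lambda>h. Hpp p q *v fst h + Hpq p q *v snd h)) (at (p, q))"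
    and "((\<lambda>w. gq (fst w) (snd w)) has_derivative (\<lambda>h. Hqp p q *v fst h + Hqq p q *v snd h)) (at (p, q))"
    using assms unfolding C2_on2_def by (auto simp: inner_prod_def)
  from hessian_symmetric[OF this(1) assms(2) this(2) has_derivative_Pair[OF this(3,4)], of "(a, 0)" "(0, b)"]
  show ?thesis
    by simp
qed

section \<open>Loewner bounds on the probability simplex\<close>

definition uniform_dist :: "real^'n::finite" where
  "uniform_dist = (\<chi> i. 1 / real CARD('n))"

lemma uniform_dist_in_prob_simplex: "uniform_dist \<in> prob_simplex"
  unfolding prob_simplex_def uniform_dist_def by simp

lemma convex_prob_simplex: "convex prob_simplex"
  unfolding convex_def prob_simplex_def
  by (auto simp: sum.distrib sum_distrib_left[symmetric])

lemma prob_simplex_diff_sum: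
  assumes "x \<in> prob_simplex" "y \<in> prob_simplex"
  shows "(\<Sum>i\<in>UNIV. (x - y) $ i) = 0"
  using assms unfolding prob_simplex_def by (simp add: sum_subtractf)

lemma eventually_at_right_in_prob_simplex:
  assumes "x \<in> prob_simplex" "\<forall>i. 0 < x $ i" "(\<Sum>i\<in>UNIV. v $ i) = 0"
  shows "\<forall>\<^sub>F t in at_right 0. x + t *\<^sub>R v \<in> prob_simplex"
proof -
  have "\<forall>\<^sub>F t in at_right 0. \<forall>i. 0 < (x + t *\<^sub>R v) $ i"
  proof (rule eventually_all_finite)
    fix i
    have "((\<lambda>t. (x + t *\<^sub>R v) $ i) \<longlongrightarrow> x $ i) (at_right 0)"
      by (auto intro!: tendsto_eq_intros)
    then show "\<forall>\<^sub>F t in at_right 0. 0 < (x + t *\<^sub>R v) $ i"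
      using assms(2) by (simp add: order_tendstoD(1))
  qed
  then show ?thesis
    using assms(1,3) unfolding prob_simplex_def
    by (auto elim!: eventually_mono simp: sum.distrib sum_distrib_left[symmetric] less_imp_le)
qed

lemma tendsto_quadratic_form:
  fixes M :: "'a \<Rightarrow> real^'n::finite^'n"
  assumes "(M \<longlongrightarrow> N) F"
  shows "((\<lambda>s. v \<bullet> (M s *v v)) \<longlongrightarrow> v \<bullet> (N *v v)) F"
  using assms by (auto intro!: tendsto_intros simp: matrix_vector_mult_def inner_vec_def)

lemma psd_ge_of_strongly_monotone_at_interior_point:
  fixes G :: "real^'n::finite \<Rightarrow> real^'n"
  assumes "(G has_derivative (\<lambda>h. M *v h)) (at x)"
    and "x \<in> prob_simplex" "\<forall>i. 0 < x $ i"
    and "\<And>y. y \<in> prob_simplex \<Longrightarrow> \<alpha> * (norm (y - x))\<^sup>2 \<le> (y - x) \<bullet> (G y - G x)"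
  shows "psd_ge M \<alpha>"
  unfolding psd_ge_def
  using derivative_bound_of_strongly_monotone[OF assms(1) eventually_at_right_in_prob_simplex[OF assms(2,3)] assms(4)]
  by blast

lemma psd_ge_of_strongly_monotone_on_prob_simplex:
  fixes G :: "real^'n::finite \<Rightarrow> real^'n" and M :: "real^'n \<Rightarrow> real^'n^'n"
  assumes "open U" "prob_simplex \<subseteq> U"
    and deriv: "\<And>x. x \<in> U \<Longrightarrow> (G has_derivative (\<lambda>h. M x *v h)) (at x)"
    and "continuous_on U M"
    and mono: "\<And>x y. x \<in> prob_simplex \<Longrightarrow> y \<in> prob_simplex \<Longrightarrow>
                 \<alpha> * (norm (y - x))\<^sup>2 \<le> (y - x) \<bullet> (G y - G x)"
    and x: "x \<in> prob_simplex"
  shows "psd_ge (M x) \<alpha>"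
  unfolding psd_ge_def
proof (intro allI impI)
  fix v :: "real^'n"
  assume "(\<Sum>i\<in>UNIV. v $ i) = 0"
  \<comment> \<open>approach x through interior points, where every tangent direction is feasible\<close>
  define X where "X = (\<lambda>s. x + s *\<^sub>R (uniform_dist - x))"
  have "psd_ge (M (X s)) \<alpha>" if s: "0 < s" "s < 1" for s
  proof (rule psd_ge_of_strongly_monotone_at_interior_point)
    have "X s = (1 - s) *\<^sub>R x + s *\<^sub>R uniform_dist"
      by (simp add: X_def algebra_simps)
    then show XS: "X s \<in> prob_simplex"
      using convexD_alt[OF convex_prob_simplex x uniform_dist_in_prob_simplex] s by simp
    show "\<forall>i. 0 < X s $ i"
    proof
      fix i
      have "0 \<le> (1 - s) * x $ i" "0 < s / real CARD('n)"
        using x s unfolding prob_simplex_def by simp_all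
      then show "0 < X s $ i"
        by (simp add: X_def uniform_dist_def algebra_simps)
    qed
    show "(G has_derivative (\<lambda>h. M (X s) *v h)) (at (X s))"
      using XS assms(2) by (intro deriv) auto
    show "\<alpha> * (norm (y - X s))\<^sup>2 \<le> (y - X s) \<bullet> (G y - G (X s))" if "y \<in> prob_simplex" for y
      using mono[OF XS that] .
  qed
  then have "\<forall>\<^sub>F s in at_right 0. \<alpha> * (v \<bullet> v) \<le> v \<bullet> (M (X s) *v v)"
    using \<open>(\<Sum>i\<in>UNIV. v $ i) = 0\<close> unfolding psd_ge_def by (intro eventually_at_rightI[of 0 1]) auto
  moreover have "isCont M x"
    using assms x continuous_on_eq_continuous_at by blast
  then have "((\<lambda>s. M (X s)) \<longlongrightarrow> M x) (at_right 0)"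
    by (rule isCont_tendsto_compose) (auto simp: X_def intro!: tendsto_eq_intros)
  ultimately show "\<alpha> * (v \<bullet> v) \<le> v \<bullet> (M x *v v)"
    by (intro tendsto_lowerbound[OF tendsto_quadratic_form]) auto
qed

lemma C2_on_psd_ge_of_strongly_monotone:
  fixes H\<nu> :: "real^'n::finite \<Rightarrow> real^'n^'n"
  assumes "prob_simplex \<subseteq> U" "C2_on U \<nu> g\<nu> H\<nu>"
    and "\<forall>x\<in>prob_simplex. \<forall>y\<in>prob_simplex.
           \<alpha> * (norm (y - x))\<^sup>2 \<le> (y - x) \<bullet> (\<epsilon> *\<^sub>R g\<nu> y - \<epsilon> *\<^sub>R g\<nu> x)"
  shows "\<forall>x\<in>prob_simplex. psd_ge (\<epsilon> *\<^sub>R H\<nu> x) \<alpha>"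
proof
  fix x :: "real^'n"
  assume "x \<in> prob_simplex"
  then show "psd_ge (\<epsilon> *\<^sub>R H\<nu> x) \<alpha>"
    using assms unfolding C2_on_def
    by (intro psd_ge_of_strongly_monotone_on_prob_simplex[where G = "\<lambda>x. \<epsilon> *\<^sub>R g\<nu> x" and U = U])
      (auto simp: scaleR_matrix_vector_assoc[symmetric] intro: has_derivative_scaleR_right continuous_intros)
qed

lemma C2_on2_psd_ge_of_strongly_monotone:
  fixes Hpp :: "real^'n::finite \<Rightarrow> real^'n \<Rightarrow> real^'n^'n"
  assumes V: "prob_simplex \<times> prob_simplex \<subseteq> V" and C2: "C2_on2 V D gp gq Hpp Hpq Hqp Hqq"
    and mono: "\<forall>q\<in>prob_simplex. \<forall>x\<in>prob_simplex. \<forall>y\<in>prob_simplex.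
                 \<alpha> * (norm (y - x))\<^sup>2 \<le> (y - x) \<bullet> (gp y q - gp x q)"
  shows "\<forall>p\<in>prob_simplex. \<forall>q\<in>prob_simplex. psd_ge (Hpp p q) \<alpha>"
proof (intro ballI)
  fix p q :: "real^'n"
  assume "p \<in> prob_simplex" "q \<in> prob_simplex"
  define U where "U = (\<lambda>x. (x, q)) -` V"
  have "open U"
    unfolding U_def using C2 unfolding C2_on2_def
    by (intro open_vimage continuous_intros) auto
  moreover have "prob_simplex \<subseteq> U"
    using V \<open>q \<in> prob_simplex\<close> by (auto simp: U_def)
  moreover have "((\<lambda>x. gp x q) has_derivative (\<lambda>h. Hpp x q *v h)) (at x)" if "x \<in> U" for x
  proof -
    have "((\<lambda>w. gp (fst w) (snd w)) has_derivative (\<lambda>h. Hpp x q *v fst h + Hpq x q *v snd h)) (at (x, q))"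
      using C2 that unfolding C2_on2_def U_def by fastforce
    moreover have "((\<lambda>x. (x, q)) has_derivative (\<lambda>h. (h, 0))) (at x)"
      by (auto intro!: derivative_eq_intros)
    ultimately show ?thesis
      using diff_chain_at[of "\<lambda>x. (x, q)"] by (fastforce simp: o_def)
  qed
  moreover have "continuous_on U (\<lambda>x. Hpp x q)"
  proof -
    have "continuous_on V (\<lambda>w. Hpp (fst w) (snd w))"
      using C2 unfolding C2_on2_def by blast
    moreover have "continuous_on U (\<lambda>x. (x, q))"
      by (intro continuous_intros)
    moreover have "(\<lambda>x. (x, q)) ` U \<subseteq> V"
      by (auto simp: U_def)
    ultimately show ?thesis
      using continuous_on_compose2[of V "\<lambda>w. Hpp (fst w) (snd w)" U "\<lambda>x. (x, q)"] by simp
  qed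
  ultimately show "psd_ge (Hpp p q) \<alpha>"
    using mono \<open>p \<in> prob_simplex\<close> \<open>q \<in> prob_simplex\<close>
    by (intro psd_ge_of_strongly_monotone_on_prob_simplex[where G = "\<lambda>x. gp x q"]) auto
qed

section \<open>The modified game\<close>

lemma inner_game_F_diff:
  "((\<pi>1, \<pi>2, p1, p2) - (\<pi>1', \<pi>2', p1', p2')) \<bullet>
     (game_F R1 R2 \<epsilon>1 \<epsilon>2 g\<nu>1 g\<nu>2 gp1 gp2 (\<pi>1, \<pi>2, p1, p2) - game_F R1 R2 \<epsilon>1 \<epsilon>2 g\<nu>1 g\<nu>2 gp1 gp2 (\<pi>1', \<pi>2', p1', p2'))
   = ((p1 - p1') \<bullet> (gp1 p1 \<pi>2 - gp1 p1' \<pi>2') + (\<pi>2 - \<pi>2') \<bullet> (\<epsilon>2 *\<^sub>R g\<nu>2 \<pi>2 - \<epsilon>2 *\<^sub>R g\<nu>2 \<pi>2'))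
   + ((p2 - p2') \<bullet> (gp2 p2 \<pi>1 - gp2 p2' \<pi>1') + (\<pi>1 - \<pi>1') \<bullet> (\<epsilon>1 *\<^sub>R g\<nu>1 \<pi>1 - \<epsilon>1 *\<^sub>R g\<nu>1 \<pi>1'))"
proof -
  have transpose_payoff: "y \<bullet> (transpose R *v x) = x \<bullet> (R *v y)" for R :: "real^'m::finite^'k::finite" and x y
    by (simp add: dot_lmul_matrix[symmetric] inner_commute)
  show ?thesis
    unfolding game_F_def
    by (simp add: inner_Pair inner_diff_right inner_diff_left inner_add_right transpose_payoff
        matrix_vector_mult_diff_distrib del: transpose_matrix_vector)
qed

lemma strongly_monotone_game_blockwise:
  fixes R1 :: "real^'n2::finite^'n1::finite"
  assumes "strongly_monotone_game R1 R2 \<epsilon>1 \<epsilon>2 g\<nu>1 g\<nu>2 gp1 gp2 \<alpha>"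
  shows "\<forall>x\<in>prob_simplex. \<forall>y\<in>prob_simplex.
           \<alpha> * (norm (y - x))\<^sup>2 \<le> (y - x) \<bullet> (\<epsilon>1 *\<^sub>R g\<nu>1 y - \<epsilon>1 *\<^sub>R g\<nu>1 x)"
    and "\<forall>x\<in>prob_simplex. \<forall>y\<in>prob_simplex.
           \<alpha> * (norm (y - x))\<^sup>2 \<le> (y - x) \<bullet> (\<epsilon>2 *\<^sub>R g\<nu>2 y - \<epsilon>2 *\<^sub>R g\<nu>2 x)"
    and "\<forall>q\<in>prob_simplex. \<forall>x\<in>prob_simplex. \<forall>y\<in>prob_simplex.
           \<alpha> * (norm (y - x))\<^sup>2 \<le> (y - x) \<bullet> (gp1 y q - gp1 x q)"
    and "\<forall>q\<in>prob_simplex. \<forall>x\<in>prob_simplex. \<forall>y\<in>prob_simplex.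
           \<alpha> * (norm (y - x))\<^sup>2 \<le> (y - x) \<bullet> (gp2 y q - gp2 x q)"
proof -
  have sm: "\<alpha> * (norm ((\<pi>1, \<pi>2, p1, p2) - (\<pi>1', \<pi>2', p1', p2')))\<^sup>2
      \<le> ((p1 - p1') \<bullet> (gp1 p1 \<pi>2 - gp1 p1' \<pi>2') + (\<pi>2 - \<pi>2') \<bullet> (\<epsilon>2 *\<^sub>R g\<nu>2 \<pi>2 - \<epsilon>2 *\<^sub>R g\<nu>2 \<pi>2'))
       + ((p2 - p2') \<bullet> (gp2 p2 \<pi>1 - gp2 p2' \<pi>1') + (\<pi>1 - \<pi>1') \<bullet> (\<epsilon>1 *\<^sub>R g\<nu>1 \<pi>1 - \<epsilon>1 *\<^sub>R g\<nu>1 \<pi>1'))"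
    if "(\<pi>1, \<pi>2, p1, p2) \<in> joint_set" "(\<pi>1', \<pi>2', p1', p2') \<in> joint_set" for \<pi>1 \<pi>2 p1 p2 \<pi>1' \<pi>2' p1' p2'
    using assms that unfolding strongly_monotone_game_def by (metis inner_game_F_diff)
  note u = uniform_dist_in_prob_simplex
  show "\<forall>x\<in>prob_simplex. \<forall>y\<in>prob_simplex.
          \<alpha> * (norm (y - x))\<^sup>2 \<le> (y - x) \<bullet> (\<epsilon>1 *\<^sub>R g\<nu>1 y - \<epsilon>1 *\<^sub>R g\<nu>1 x)"
    using sm[of _ uniform_dist uniform_dist uniform_dist _ uniform_dist uniform_dist uniform_dist]
    by (simp add: joint_set_def norm_Pair u)
  show "\<forall>x\<in>prob_simplex. \<forall>y\<in>prob_simplex.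
          \<alpha> * (norm (y - x))\<^sup>2 \<le> (y - x) \<bullet> (\<epsilon>2 *\<^sub>R g\<nu>2 y - \<epsilon>2 *\<^sub>R g\<nu>2 x)"
    using sm[of uniform_dist _ uniform_dist uniform_dist uniform_dist _ uniform_dist uniform_dist]
    by (simp add: joint_set_def norm_Pair u)
  show "\<forall>q\<in>prob_simplex. \<forall>x\<in>prob_simplex. \<forall>y\<in>prob_simplex.
          \<alpha> * (norm (y - x))\<^sup>2 \<le> (y - x) \<bullet> (gp1 y q - gp1 x q)"
  proof (intro ballI)
    fix q x y :: "real^'n2"
    assume "q \<in> prob_simplex" "x \<in> prob_simplex" "y \<in> prob_simplex"
    then show "\<alpha> * (norm (y - x))\<^sup>2 \<le> (y - x) \<bullet> (gp1 y q - gp1 x q)"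
      using sm[of uniform_dist q y uniform_dist uniform_dist q x uniform_dist]
      by (simp add: joint_set_def norm_Pair u)
  qed
  show "\<forall>q\<in>prob_simplex. \<forall>x\<in>prob_simplex. \<forall>y\<in>prob_simplex.
          \<alpha> * (norm (y - x))\<^sup>2 \<le> (y - x) \<bullet> (gp2 y q - gp2 x q)"
  proof (intro ballI)
    fix q x y :: "real^'n1"
    assume "q \<in> prob_simplex" "x \<in> prob_simplex" "y \<in> prob_simplex"
    then show "\<alpha> * (norm (y - x))\<^sup>2 \<le> (y - x) \<bullet> (gp2 y q - gp2 x q)"
      using sm[of q uniform_dist uniform_dist y q uniform_dist uniform_dist x]
      by (simp add: joint_set_def norm_Pair u)
  qed
qed

lemma residual_pair_operator_strongly_monotone:
  fixes gp gq :: "real^'n::finite \<Rightarrow> real^'n \<Rightarrow> real^'n" and \<nu> :: "real^'n \<Rightarrow> real"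
  assumes V: "prob_simplex \<times> prob_simplex \<subseteq> V" and C2D: "C2_on2 V D gp gq Hpp Hpq Hqp Hqq"
    and U: "prob_simplex \<subseteq> U" and C2\<nu>: "C2_on U \<nu> g\<nu> H\<nu>"
    and psd: "\<forall>q\<in>prob_simplex. \<forall>p\<in>prob_simplex.
                psd_ge (\<epsilon> *\<^sub>R H\<nu> q - (1/2) *\<^sub>R Hqq p q) \<alpha> \<and> psd_ge ((1/2) *\<^sub>R Hpp p q) \<alpha>"
    and simplex: "p \<in> prob_simplex" "p' \<in> prob_simplex" "q \<in> prob_simplex" "q' \<in> prob_simplex"
  defines "G \<equiv> \<lambda>w. ((1/2) *\<^sub>R gp (fst w) (snd w), \<epsilon> *\<^sub>R g\<nu> (snd w) - (1/2) *\<^sub>R gq (fst w) (snd w))"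
  shows "\<alpha> * (norm ((p, q) - (p', q')))\<^sup>2 \<le> ((p, q) - (p', q')) \<bullet> (G (p, q) - G (p', q'))"
proof -
  let ?S = "prob_simplex \<times> prob_simplex"
  define G' where "G' = (\<lambda>w h.
    ((1/2) *\<^sub>R (Hpp (fst w) (snd w) *v fst h + Hpq (fst w) (snd w) *v snd h),
     \<epsilon> *\<^sub>R (H\<nu> (snd w) *v snd h) - (1/2) *\<^sub>R (Hqp (fst w) (snd w) *v fst h + Hqq (fst w) (snd w) *v snd h)))"
  show ?thesis
  proof (rule strongly_monotone_of_derivative_bound[where C = ?S and G' = G'])
    show "convex ?S"
      by (intro convex_Times convex_prob_simplex)
    show "(p, q) \<in> ?S" "(p', q') \<in> ?S"
      using simplex by auto
    show "(G has_derivative G' w) (at w)" if "w \<in> ?S" for w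
    proof -
      have "((\<lambda>w. gp (fst w) (snd w)) has_derivative (\<lambda>h. Hpp (fst w) (snd w) *v fst h + Hpq (fst w) (snd w) *v snd h)) (at w)"
        "((\<lambda>w. gq (fst w) (snd w)) has_derivative (\<lambda>h. Hqp (fst w) (snd w) *v fst h + Hqq (fst w) (snd w) *v snd h)) (at w)"
        using C2D V that unfolding C2_on2_def by auto
      moreover have "((\<lambda>w. g\<nu> (snd w)) has_derivative (\<lambda>h. H\<nu> (snd w) *v snd h)) (at w)"
        using C2\<nu> U that unfolding C2_on_def
        by (auto intro!: diff_chain_at[OF has_derivative_snd[OF has_derivative_ident], unfolded o_def])
      ultimately show ?thesis
        unfolding G_def G'_def
        by (intro has_derivative_Pair has_derivative_diff has_derivative_scaleR_right)
    qed
    show "\<alpha> * (norm ((p, q) - (p', q')))\<^sup>2 \<le> ((p, q) - (p', q')) \<bullet> G' w ((p, q) - (p', q'))"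
      if "w \<in> ?S" for w
    proof -
      obtain s t where w: "w = (s, t)" "s \<in> prob_simplex" "t \<in> prob_simplex"
        using \<open>w \<in> ?S\<close> by auto
      define a b where "a = p - p'" and "b = q - q'"
      have "(\<Sum>i\<in>UNIV. a $ i) = 0" "(\<Sum>i\<in>UNIV. b $ i) = 0"
        unfolding a_def b_def by (simp_all only: prob_simplex_diff_sum simplex)
      then have "\<alpha> * (a \<bullet> a) \<le> a \<bullet> ((1/2) *\<^sub>R Hpp s t *v a)"
        "\<alpha> * (b \<bullet> b) \<le> b \<bullet> ((\<epsilon> *\<^sub>R H\<nu> t - (1/2) *\<^sub>R Hqq s t) *v b)"
        using psd w unfolding psd_ge_def by blast+
      \<comment> \<open>the mixed terms of the quadratic form cancel\<close>
      moreover have "(Hqp s t *v a) \<bullet> b = (Hpq s t *v b) \<bullet> a"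
        using C2D V w by (intro C2_on2_mixed_hessian_symmetric) auto
      ultimately show ?thesis
        unfolding w G'_def a_def b_def
        by (simp add: power2_norm_eq_inner inner_Pair inner_add_right inner_diff_right
            matrix_vector_mult_diff_rdistrib scaleR_matrix_vector_assoc[symmetric] inner_commute algebra_simps)
    qed
  qed
qed

lemma pair_block_strongly_monotone:
  fixes D :: "real^'n::finite \<Rightarrow> real^'n \<Rightarrow> real" and \<nu> :: "real^'n \<Rightarrow> real"
  assumes V: "prob_simplex \<times> prob_simplex \<subseteq> V" and C2D: "C2_on2 V D gp gq Hpp Hpq Hqp Hqq"
    and cvx: "convex_on (prob_simplex \<times> prob_simplex) (\<lambda>w. D (fst w) (snd w))"
    and U: "prob_simplex \<subseteq> U" and C2\<nu>: "C2_on U \<nu> g\<nu> H\<nu>"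
    and psd: "\<forall>q\<in>prob_simplex. \<forall>p\<in>prob_simplex.
                psd_ge (\<epsilon> *\<^sub>R H\<nu> q - (1/2) *\<^sub>R Hqq p q) \<alpha> \<and> psd_ge ((1/2) *\<^sub>R Hpp p q) \<alpha>"
    and simplex: "p \<in> prob_simplex" "p' \<in> prob_simplex" "q \<in> prob_simplex" "q' \<in> prob_simplex"
  shows "\<alpha> * ((norm (p - p'))\<^sup>2 + (norm (q - q'))\<^sup>2)
           \<le> (p - p') \<bullet> (gp p q - gp p' q') + (q - q') \<bullet> (\<epsilon> *\<^sub>R g\<nu> q - \<epsilon> *\<^sub>R g\<nu> q')"
proof -
  define gD where "gD = (\<lambda>w. (gp (fst w) (snd w), gq (fst w) (snd w)))"
  have "((\<lambda>w. D (fst w) (snd w)) has_derivative (\<lambda>h. gD w \<bullet> h)) (at w)" if "w \<in> V" for w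
    using C2D that unfolding C2_on2_def by (auto simp: gD_def inner_prod_def)
  then have "0 \<le> ((p, q) - (p', q')) \<bullet> (gD (p, q) - gD (p', q'))"
    using V simplex by (intro convex_on_gradient_monotone[OF cvx]) auto
  with residual_pair_operator_strongly_monotone[OF V C2D U C2\<nu> psd simplex] show ?thesis
    by (simp add: gD_def power2_norm_eq_inner inner_diff_right algebra_simps)
qed

lemma strongly_monotone_game_of_psd_ge:
  fixes R1 :: "real^('n2::finite)^('n1::finite)" and R2 :: "real^'n1^'n2"
  assumes "prob_simplex \<subseteq> U1" "C2_on U1 \<nu>1 g\<nu>1 H\<nu>1" "prob_simplex \<subseteq> U2" "C2_on U2 \<nu>2 g\<nu>2 H\<nu>2"
    and "prob_simplex \<times> prob_simplex \<subseteq> V1" "C2_on2 V1 D1 gp1 gq1 Hpp1 Hpq1 Hqp1 Hqq1"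
    and "prob_simplex \<times> prob_simplex \<subseteq> V2" "C2_on2 V2 D2 gp2 gq2 Hpp2 Hpq2 Hqp2 Hqq2"
    and "convex_on (prob_simplex \<times> prob_simplex) (\<lambda>w. D1 (fst w) (snd w))"
    and "convex_on (prob_simplex \<times> prob_simplex) (\<lambda>w. D2 (fst w) (snd w))"
    and "\<forall>\<pi>1\<in>prob_simplex. \<forall>p2\<in>prob_simplex.
           psd_ge (\<epsilon>1 *\<^sub>R H\<nu>1 \<pi>1 - (1/2) *\<^sub>R Hqq2 p2 \<pi>1) \<alpha> \<and> psd_ge ((1/2) *\<^sub>R Hpp2 p2 \<pi>1) \<alpha>"
    and "\<forall>\<pi>2\<in>prob_simplex. \<forall>p1\<in>prob_simplex.
           psd_ge (\<epsilon>2 *\<^sub>R H\<nu>2 \<pi>2 - (1/2) *\<^sub>R Hqq1 p1 \<pi>2) \<alpha> \<and> psd_ge ((1/2) *\<^sub>R Hpp1 p1 \<pi>2) \<alpha>"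
  shows "strongly_monotone_game R1 R2 \<epsilon>1 \<epsilon>2 g\<nu>1 g\<nu>2 gp1 gp2 \<alpha>"
  unfolding strongly_monotone_game_def
proof (intro ballI)
  fix z z' :: "(real^'n1) \<times> (real^'n2) \<times> (real^'n2) \<times> (real^'n1)"
  assume "z \<in> joint_set" "z' \<in> joint_set"
  then obtain \<pi>1 \<pi>2 p1 p2 \<pi>1' \<pi>2' p1' p2' where z: "z = (\<pi>1, \<pi>2, p1, p2)" "z' = (\<pi>1', \<pi>2', p1', p2')"
    and simplex: "\<pi>1 \<in> prob_simplex" "\<pi>2 \<in> prob_simplex" "p1 \<in> prob_simplex" "p2 \<in> prob_simplex"
      "\<pi>1' \<in> prob_simplex" "\<pi>2' \<in> prob_simplex" "p1' \<in> prob_simplex" "p2' \<in> prob_simplex"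
    unfolding joint_set_def by auto
  show "\<alpha> * (norm (z - z'))\<^sup>2 \<le> (z - z') \<bullet>
      (game_F R1 R2 \<epsilon>1 \<epsilon>2 g\<nu>1 g\<nu>2 gp1 gp2 z - game_F R1 R2 \<epsilon>1 \<epsilon>2 g\<nu>1 g\<nu>2 gp1 gp2 z')"
    using pair_block_strongly_monotone[OF assms(5,6,9,3,4,12) simplex(3,7,2,6)]
      pair_block_strongly_monotone[OF assms(7,8,10,1,2,11) simplex(4,8,1,5)]
    unfolding z inner_game_F_diff by (simp add: norm_Pair algebra_simps)
qed

theorem proposition2:
  fixes R1 :: "real^('n2::finite)^('n1::finite)" and R2 :: "real^'n1^'n2"
    and \<epsilon>1 \<epsilon>2 \<alpha> :: real
    and \<nu>1 :: "real^'n1 \<Rightarrow> real" and g\<nu>1 :: "real^'n1 \<Rightarrow> real^'n1" and H\<nu>1 :: "real^'n1 \<Rightarrow> real^'n1^'n1"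
    and \<nu>2 :: "real^'n2 \<Rightarrow> real" and g\<nu>2 :: "real^'n2 \<Rightarrow> real^'n2" and H\<nu>2 :: "real^'n2 \<Rightarrow> real^'n2^'n2"
    and D1 :: "real^'n2 \<Rightarrow> real^'n2 \<Rightarrow> real" and gp1 gq1 :: "real^'n2 \<Rightarrow> real^'n2 \<Rightarrow> real^'n2"
    and Hpp1 Hpq1 Hqp1 Hqq1 :: "real^'n2 \<Rightarrow> real^'n2 \<Rightarrow> real^'n2^'n2"
    and D2 :: "real^'n1 \<Rightarrow> real^'n1 \<Rightarrow> real" and gp2 gq2 :: "real^'n1 \<Rightarrow> real^'n1 \<Rightarrow> real^'n1"
    and Hpp2 Hpq2 Hqp2 Hqq2 :: "real^'n1 \<Rightarrow> real^'n1 \<Rightarrow> real^'n1^'n1"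
    and U1 :: "(real^'n1) set" and U2 :: "(real^'n2) set"
    and V1 :: "((real^'n2) \<times> (real^'n2)) set" and V2 :: "((real^'n1) \<times> (real^'n1)) set"
  assumes "\<alpha> > 0" and "\<epsilon>1 > 0" and "\<epsilon>2 > 0"
    and "prob_simplex \<subseteq> U1" and "C2_on U1 \<nu>1 g\<nu>1 H\<nu>1" and "strictly_convex_on U1 \<nu>1"
    and "prob_simplex \<subseteq> U2" and "C2_on U2 \<nu>2 g\<nu>2 H\<nu>2" and "strictly_convex_on U2 \<nu>2"
    and "prob_simplex \<times> prob_simplex \<subseteq> V1" and "C2_on2 V1 D1 gp1 gq1 Hpp1 Hpq1 Hqp1 Hqq1"
    and "\<forall>q\<in>prob_simplex. convex_on prob_simplex (\<lambda>p. D1 p q)"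
    and "prob_simplex \<times> prob_simplex \<subseteq> V2" and "C2_on2 V2 D2 gp2 gq2 Hpp2 Hpq2 Hqp2 Hqq2"
    and "\<forall>q\<in>prob_simplex. convex_on prob_simplex (\<lambda>p. D2 p q)"
  shows
    "(strongly_monotone_game R1 R2 \<epsilon>1 \<epsilon>2 g\<nu>1 g\<nu>2 gp1 gp2 \<alpha> \<longrightarrow>
        (\<forall>x\<in>prob_simplex. psd_ge (\<epsilon>1 *\<^sub>R H\<nu>1 x) \<alpha>) \<and>
        (\<forall>x\<in>prob_simplex. psd_ge (\<epsilon>2 *\<^sub>R H\<nu>2 x) \<alpha>) \<and>
        (\<forall>p\<in>prob_simplex. \<forall>q\<in>prob_simplex. psd_ge (Hpp1 p q) \<alpha>) \<and>
        (\<forall>p\<in>prob_simplex. \<forall>q\<in>prob_simplex. psd_ge (Hpp2 p q) \<alpha>))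
     \<and>
     ((convex_on (prob_simplex \<times> prob_simplex) (\<lambda>w. D1 (fst w) (snd w)) \<and>
       convex_on (prob_simplex \<times> prob_simplex) (\<lambda>w. D2 (fst w) (snd w)) \<and>
       (\<forall>\<pi>1\<in>prob_simplex. \<forall>p2\<in>prob_simplex.
          psd_ge (\<epsilon>1 *\<^sub>R H\<nu>1 \<pi>1 - (1/2) *\<^sub>R Hqq2 p2 \<pi>1) \<alpha> \<and> psd_ge ((1/2) *\<^sub>R Hpp2 p2 \<pi>1) \<alpha>) \<and>
       (\<forall>\<pi>2\<in>prob_simplex. \<forall>p1\<in>prob_simplex.
          psd_ge (\<epsilon>2 *\<^sub>R H\<nu>2 \<pi>2 - (1/2) *\<^sub>R Hqq1 p1 \<pi>2) \<alpha> \<and> psd_ge ((1/2) *\<^sub>R Hpp1 p1 \<pi>2) \<alpha>))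
      \<longrightarrow> strongly_monotone_game R1 R2 \<epsilon>1 \<epsilon>2 g\<nu>1 g\<nu>2 gp1 gp2 \<alpha>)"
proof -
  show ?thesis
    using strongly_monotone_game_blockwise[of R1 R2 \<epsilon>1 \<epsilon>2 g\<nu>1 g\<nu>2 gp1 gp2 \<alpha>]
      C2_on_psd_ge_of_strongly_monotone[where \<epsilon> = \<epsilon>1 and \<alpha> = \<alpha>, OF assms(4,5)]
      C2_on_psd_ge_of_strongly_monotone[where \<epsilon> = \<epsilon>2 and \<alpha> = \<alpha>, OF assms(7,8)]
      C2_on2_psd_ge_of_strongly_monotone[where \<alpha> = \<alpha>, OF assms(10,11)]
      C2_on2_psd_ge_of_strongly_monotone[where \<alpha> = \<alpha>, OF assms(13,14)]
      strongly_monotone_game_of_psd_ge[where ?R1.0 = R1 and ?R2.0 = R2 and ?\<epsilon>1.0 = \<epsilon>1 and ?\<epsilon>2.0 = \<epsilon>2 and \<alpha> = \<alpha>,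
        OF assms(4,5,7,8,10,11,13,14)]
    by blast
qed

end
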